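(* Let $\{X_t\}$ be a Geo-INAR(1) process with $\mu>0$, $\alpha\in(0,1)$, $\mu_\varepsilon=(1-\alpha)\mu$. Then the joint probability generating function of $(X_t,X_{t-1})$ is, for $s_1,s_2$ in a neighbourhood of $[0,1]$, $$E\big(s_1^{X_t}s_2^{X_{t-1}}\big)=\frac{1}{1+\mu\big[(1-s_1)+(1-s_2)+(\mu_\varepsilon-\alpha)(1-s_1)(1-s_2)\big]},$$ which is symmetric in $(s_1,s_2)$; hence $(X_t,X_{t-1})\overset{d}{=}(X_{t-1},X_t)$ and the process is time-reversible, i.e. for all $n$ and times $t_1<\dots<t_n$, $(X_{t_1},\dots,X_{t_n})\overset{d}{=}(X_{t_n},\dots,X_{t_1})$ (up to the corresponding time shift).
   Context: Geo-INAR(1) process: fix $\mu>0$, $\alpha\in(0,1)$, $\mu_\varepsilon=(1-\alpha)\mu$, $\pi=1-\alpha/\mu_\varepsilon$. Let $\{\varepsilon_t\}$ be i.i.d. $\mathrm{Geo}(\mu_\varepsilon)$ and, for each $t$, let $\{G_{t,i}\}_{i\ge1}$ be i.i.d. $\mathrm{ZMG}(\pi,\mu_\varepsilon)$, all mutually independent. The process is the Markov chain $X_t=\sum_{i=1}^{X_{t-1}}G_{t,i}+\varepsilon_t$, with $\varepsilon_t$ independent of $X_{t-h}$ for $h\ge1$, and $X_t\sim\mathrm{Geo}(\mu)$ for all $t$ (stationary). $\mathrm{Geo}(m)$ has $P(k)=\frac{m^k}{(1+m)^{k+1}}$; $\mathrm{ZMG}(\pi,m)$ has $P(0)=\pi+\frac{1-\pi}{1+m}$,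 $P(k)=(1-\pi)\frac{m^k}{(1+m)^{k+1}}$, $k\ge1$. *)

theory Defs
  imports "HOL-Probability.Probability"
begin

definition geo_p :: "real \<Rightarrow> nat \<Rightarrow> real" where
  "geo_p m k = m ^ k / (1 + m) ^ (k + 1)"

definition zmg_p :: "real \<Rightarrow> real \<Rightarrow> nat \<Rightarrow> real" where
  "zmg_p p m k = (if k = 0 then p + (1 - p) / (1 + m) else (1 - p) * m ^ k / (1 + m) ^ (k + 1))"

definition geo_inar1 ::
  "'w measure \<Rightarrow> real \<Rightarrow> real \<Rightarrow> (int \<Rightarrow> 'w \<Rightarrow> nat) \<Rightarrow> (int \<Rightarrow> nat \<Rightarrow> 'w \<Rightarrow> nat)
     \<Rightarrow> (int \<Rightarrow> 'w \<Rightarrow> nat) \<Rightarrow> bool" where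
  "geo_inar1 M mu alpha eps G X \<longleftrightarrow>
     (let mu_e = (1 - alpha) * mu; p = 1 - alpha / mu_e in
      prob_space M \<and>
      (\<forall>t. X t \<in> measurable M (count_space UNIV)) \<and>
      (\<forall>t. eps t \<in> measurable M (count_space UNIV)) \<and>
      (\<forall>t i. G t i \<in> measurable M (count_space UNIV)) \<and>
      (\<forall>t k. measure M {w \<in> space M. eps t w = k} = geo_p mu_e k) \<and>
      (\<forall>t i k. i \<ge> 1 \<longrightarrow> measure M {w \<in> space M. G t i w = k} = zmg_p p mu_e k) \<and>
      prob_space.indep_vars M (\<lambda>_. count_space UNIV)
        (\<lambda>j. case j of Inl t \<Rightarrow> eps t | Inr (t, i) \<Rightarrow> G t i)
        (range Inl \<union> Inr ` (UNIV \<times> {1..})) \<and>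
      (\<forall>t. \<forall>w\<in>space M. X t w = (\<Sum>i = 1..X (t - 1) w. G t i w) + eps t w) \<and>
      (\<forall>t (k::nat). prob_space.indep_var M (count_space UNIV) (\<lambda>w. [eps t w])
             (count_space UNIV) (\<lambda>w. map (\<lambda>h. X (t - int h) w) [1..<k + 1])) \<and>
      (\<forall>t k. measure M {w \<in> space M. X t w = k} = geo_p mu k))"

end

(* Unrolling the recursion n steps writes X t as a function of X (t - n) and of the innovations
   (eps s, G s i) with t - n < s <= t. Started from K instead of 0, the unrolled recursion differs
   from the one started at 0 with probability at most K alpha^n, so by tightness of X (t - n), X t is
   a limit in probability of functions of the innovations up to time t. Hence the past of X is
   independent of the innovations driving the next step: P(X (t - 1) = a, X t = b) = geo(a) K(a, b),
   where the one-step kernel K has generating function G_pgf^a * eps_pgf. Summing against the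
   geometric law gives the closed form of the joint generating function; it is symmetric, so
   comparing coefficients gives detailed balance geo(a) K(a, b) = geo(b) K(b, a), under which every
   path probability is invariant under time reversal. *)

theory Submission
  imports Defs
begin

lemma geo_p_eq_power: "m \<ge> 0 \<Longrightarrow> geo_p m k = 1 / (1 + m) * (m / (1 + m)) ^ k"
  by (simp add: geo_p_def power_divide)

lemma geo_p_pos: "m > 0 \<Longrightarrow> geo_p m k > 0"
  by (simp add: geo_p_def)

lemma geo_p_pgf_sums:
  fixes m s :: real
  assumes m: "m \<ge> 0" and s: "\<bar>s\<bar> * m < 1 + m"
  shows "(\<lambda>k. geo_p m k * s ^ k) sums (1 / (1 + m * (1 - s)))"
proof -
  have "norm (m * s / (1 + m)) < 1"
    using m s by (simp add: abs_mult abs_divide field_simps mult.commute)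
  then have "(\<lambda>k. 1 / (1 + m) * (m * s / (1 + m)) ^ k) sums (1 / (1 + m) * (1 / (1 - m * s / (1 + m))))"
    by (intro sums_mult geometric_sums)
  moreover have "1 / (1 + m) * (1 / (1 - m * s / (1 + m))) = 1 / (1 + m * (1 - s))"
    using m s by (simp add: field_simps)
  ultimately show ?thesis
    using m by (simp add: geo_p_eq_power power_mult_distrib power_divide)
qed

lemma geo_p_mean_sums:
  fixes m :: real
  assumes m: "m \<ge> 0"
  shows "(\<lambda>k. geo_p m k * real k) sums m"
proof -
  have "norm (m / (1 + m)) < 1" using m by simp
  then have "(\<lambda>k. 1 / (1 + m) * ((m / (1 + m)) ^ k * real k)) sums
      (1 / (1 + m) * ((m / (1 + m)) / (1 - m / (1 + m))\<^sup>2))"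
    by (intro sums_mult geometric_sums_times_n)
  moreover have "1 - m / (1 + m) = 1 / (1 + m)"
    using m by (simp add: field_simps)
  ultimately show ?thesis
    using m by (simp add: geo_p_eq_power power2_eq_square)
qed

lemma zmg_p_eq_geo_p: "zmg_p p m k = (if k = 0 then p else 0) + (1 - p) * geo_p m k"
  by (simp add: zmg_p_def geo_p_def)

lemma zmg_p_pgf_sums:
  fixes m s p :: real
  assumes "m \<ge> 0" and "\<bar>s\<bar> * m < 1 + m"
  shows "(\<lambda>k. zmg_p p m k * s ^ k) sums (p + (1 - p) / (1 + m * (1 - s)))"
proof -
  have "(\<lambda>k. (if k = 0 then p else 0) * s ^ k) = (\<lambda>k. if k = 0 then p else 0)"
    by auto
  then have "(\<lambda>k. (if k = 0 then p else 0) * s ^ k) sums p"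
    using sums_single[of 0 "\<lambda>_. p"] by simp
  then have "(\<lambda>k. (if k = 0 then p else 0) * s ^ k + (1 - p) * (geo_p m k * s ^ k))
      sums (p + (1 - p) * (1 / (1 + m * (1 - s))))"
    by (intro sums_add sums_mult geo_p_pgf_sums assms)
  then show ?thesis by (simp add: zmg_p_eq_geo_p algebra_simps)
qed

lemma zmg_p_mean_sums:
  fixes m p :: real
  assumes "m \<ge> 0"
  shows "(\<lambda>k. zmg_p p m k * real k) sums ((1 - p) * m)"
proof -
  have "(\<lambda>k. zmg_p p m k * real k) = (\<lambda>k. (1 - p) * (geo_p m k * real k))"
    by (auto simp: zmg_p_eq_geo_p fun_eq_iff)
  then show ?thesis by (simp add: sums_mult geo_p_mean_sums assms)
qed

lemma powser_coeffs_eq_0: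
  fixes d :: "nat \<Rightarrow> real"
  assumes r: "r > 0" and sums: "\<And>x. \<bar>x\<bar> < r \<Longrightarrow> (\<lambda>n. d n * x ^ n) sums 0"
  shows "d n = 0"
proof (induction n rule: less_induct)
  case (less n)
  have "(\<lambda>m. d (m + n) * x ^ m) sums 0" if x: "x \<noteq> 0" "norm x < r" for x
  proof -
    have "(\<lambda>m. d (m + n) * x ^ (m + n)) sums (0 - (\<Sum>i<n. d i * x ^ i))"
      using sums[of x] x by (subst sums_iff_shift) simp
    then have "(\<lambda>m. d (m + n) * x ^ (m + n) / x ^ n) sums 0"
      using less by (simp add: sums_divide[where c = "x ^ n", of _ 0, simplified])
    then show ?thesis using x by (simp add: power_add)
  qed
  then have "((\<lambda>_. 0) \<longlongrightarrow> d (0 + n)) (at (0::real))"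
    by (intro powser_limit_0_strong[OF r]) simp_all
  then show ?case
    using tendsto_unique[OF at_neq_bot tendsto_const] by fastforce
qed

lemma powser_coeffs_unique:
  fixes a b :: "nat \<Rightarrow> real"
  assumes "r > 0"
    and "\<And>x. \<bar>x\<bar> < r \<Longrightarrow> (\<lambda>n. a n * x ^ n) sums f x"
    and "\<And>x. \<bar>x\<bar> < r \<Longrightarrow> (\<lambda>n. b n * x ^ n) sums f x"
  shows "a = b"
proof
  fix n
  have "(\<lambda>n. (a n - b n) * x ^ n) sums 0" if "\<bar>x\<bar> < r" for x
    using sums_diff[OF assms(2,3)[OF that]] by (simp add: algebra_simps)
  then show "a n = b n"
    using powser_coeffs_eq_0[OF assms(1), of "\<lambda>n. a n - b n"] by simp
qed

lemma abs_summable_pairs_imp_row: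
  fixes c :: "nat \<Rightarrow> nat \<Rightarrow> real"
  assumes "Infinite_Set_Sum.abs_summable_on (\<lambda>(a, b). c a b * x ^ a * y ^ b) UNIV" and "x \<noteq> 0"
  shows "Infinite_Set_Sum.abs_summable_on (\<lambda>b. c a b * y ^ b) UNIV"
proof -
  have "Infinite_Set_Sum.abs_summable_on (\<lambda>b. c a b * x ^ a * y ^ b) UNIV"
    using abs_summable_on_Sigma_project2[of "\<lambda>(a, b). c a b * x ^ a * y ^ b" UNIV "\<lambda>_. UNIV" a] assms(1)
    by simp
  then have "Infinite_Set_Sum.abs_summable_on (\<lambda>b. 1 / x ^ a * (c a b * x ^ a * y ^ b)) UNIV"
    by (rule abs_summable_on_cmult_right)
  then show ?thesis using assms(2) by simp
qed

lemma abs_summable_pairs_row_sums: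
  fixes c :: "nat \<Rightarrow> nat \<Rightarrow> real"
  assumes summable: "Infinite_Set_Sum.abs_summable_on (\<lambda>(a, b). c a b * x ^ a * y ^ b) UNIV"
  shows "(\<lambda>a. (\<Sum>\<^sub>ab. c a b * y ^ b) * x ^ a) sums (\<Sum>\<^sub>a(a, b)\<in>UNIV. c a b * x ^ a * y ^ b)"
proof -
  have Sigma: "Infinite_Set_Sum.abs_summable_on (\<lambda>(a, b). c a b * x ^ a * y ^ b) (UNIV \<times> UNIV)"
    using summable by simp
  have row: "(\<Sum>\<^sub>ab. c a b * x ^ a * y ^ b) = (\<Sum>\<^sub>ab. c a b * y ^ b) * x ^ a" for a
  proof -
    have "(\<lambda>b. c a b * x ^ a * y ^ b) = (\<lambda>b. c a b * y ^ b * x ^ a)"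
      by (simp add: fun_eq_iff mult_ac)
    then show ?thesis unfolding infsetsum_def by simp
  qed
  have "Infinite_Set_Sum.abs_summable_on (\<lambda>a. \<Sum>\<^sub>ab. c a b * x ^ a * y ^ b) UNIV"
    using abs_summable_on_Sigma_project1'[OF Sigma] by simp
  then have "(\<lambda>a. \<Sum>\<^sub>ab. c a b * x ^ a * y ^ b) sums (\<Sum>\<^sub>aa. \<Sum>\<^sub>ab. c a b * x ^ a * y ^ b)"
    by (rule sums_infsetsum_nat')
  also have "(\<Sum>\<^sub>aa. \<Sum>\<^sub>ab. c a b * x ^ a * y ^ b) = (\<Sum>\<^sub>a(a, b)\<in>UNIV. c a b * x ^ a * y ^ b)"
    using infsetsum_Sigma'[OF countableI_type countableI_type Sigma] by simp
  finally show ?thesis unfolding row .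
qed

lemma powser2_coeffs_unique:
  fixes c d :: "nat \<Rightarrow> nat \<Rightarrow> real"
  assumes r: "r > 0"
    and c: "\<And>x y. \<bar>x\<bar> < r \<Longrightarrow> \<bar>y\<bar> < r \<Longrightarrow>
      Infinite_Set_Sum.abs_summable_on (\<lambda>(a, b). c a b * x ^ a * y ^ b) UNIV"
    and d: "\<And>x y. \<bar>x\<bar> < r \<Longrightarrow> \<bar>y\<bar> < r \<Longrightarrow>
      Infinite_Set_Sum.abs_summable_on (\<lambda>(a, b). d a b * x ^ a * y ^ b) UNIV"
    and eq: "\<And>x y. \<bar>x\<bar> < r \<Longrightarrow> \<bar>y\<bar> < r \<Longrightarrow>
      (\<Sum>\<^sub>a(a, b)\<in>UNIV. c a b * x ^ a * y ^ b) = (\<Sum>\<^sub>a(a, b)\<in>UNIV. d a b * x ^ a * y ^ b)"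
  shows "c = d"
proof
  fix a
  have r2: "\<bar>r / 2\<bar> < r" "r / 2 \<noteq> 0" using r by auto
  have rows: "(\<lambda>a. \<Sum>\<^sub>ab. c a b * y ^ b) = (\<lambda>a. \<Sum>\<^sub>ab. d a b * y ^ b)" if y: "\<bar>y\<bar> < r" for y
  proof (rule powser_coeffs_unique[OF r, where f = "\<lambda>x. \<Sum>\<^sub>a(a, b)\<in>UNIV. c a b * x ^ a * y ^ b"])
    fix x :: real assume x: "\<bar>x\<bar> < r"
    show "(\<lambda>a. (\<Sum>\<^sub>ab. c a b * y ^ b) * x ^ a) sums (\<Sum>\<^sub>a(a, b)\<in>UNIV. c a b * x ^ a * y ^ b)"
      by (rule abs_summable_pairs_row_sums[OF c[OF x y]])
    show "(\<lambda>a. (\<Sum>\<^sub>ab. d a b * y ^ b) * x ^ a) sums (\<Sum>\<^sub>a(a, b)\<in>UNIV. c a b * x ^ a * y ^ b)"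
      unfolding eq[OF x y] by (rule abs_summable_pairs_row_sums[OF d[OF x y]])
  qed
  show "c a = d a"
  proof (rule powser_coeffs_unique[OF r, where f = "\<lambda>y. \<Sum>\<^sub>ab. c a b * y ^ b"])
    fix y :: real assume y: "\<bar>y\<bar> < r"
    show "(\<lambda>b. c a b * y ^ b) sums (\<Sum>\<^sub>ab. c a b * y ^ b)"
      by (rule sums_infsetsum_nat', rule abs_summable_pairs_imp_row[OF c[OF r2(1) y] r2(2)])
    show "(\<lambda>b. d a b * y ^ b) sums (\<Sum>\<^sub>ab. c a b * y ^ b)"
      using sums_infsetsum_nat'[OF abs_summable_pairs_imp_row[OF d[OF r2(1) y] r2(2)]]
        fun_cong[OF rows[OF y], of a] by simp
  qed
qed

lemma infsetsum_pairs_by_rows: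
  fixes F :: "nat \<times> nat \<Rightarrow> real"
  assumes rows: "\<And>a. Infinite_Set_Sum.abs_summable_on (\<lambda>b. F (a, b)) UNIV"
    and norms: "summable (\<lambda>a. \<Sum>\<^sub>ab. norm (F (a, b)))"
    and sums: "(\<lambda>a. \<Sum>\<^sub>ab. F (a, b)) sums S"
  shows "Infinite_Set_Sum.abs_summable_on F UNIV" and "infsetsum F UNIV = S"
proof -
  have "Infinite_Set_Sum.abs_summable_on (\<lambda>a. \<Sum>\<^sub>ab. norm (F (a, b))) UNIV"
    using norms by (simp add: abs_summable_on_nat_iff infsetsum_nonneg)
  then have Sigma: "Infinite_Set_Sum.abs_summable_on F (UNIV \<times> UNIV)"
    using rows by (subst abs_summable_on_Sigma_iff) auto
  then show "Infinite_Set_Sum.abs_summable_on F UNIV" by simp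
  have "infsetsum F UNIV = (\<Sum>\<^sub>aa. \<Sum>\<^sub>ab. F (a, b))"
    using infsetsum_Sigma'[of UNIV "\<lambda>_. UNIV" "\<lambda>a b. F (a, b)"] Sigma by simp
  also have "\<dots> = S"
  proof (rule sums_unique2[OF sums_infsetsum_nat' sums])
    show "Infinite_Set_Sum.abs_summable_on (\<lambda>a. \<Sum>\<^sub>ab. F (a, b)) UNIV"
      using abs_summable_on_Sigma_project1'[of "\<lambda>a b. F (a, b)" UNIV "\<lambda>_. UNIV"] Sigma by simp
  qed
  finally show "infsetsum F UNIV = S" .
qed

lemma infsetsum_pairs_swap:
  fixes f :: "'a \<Rightarrow> 'b \<Rightarrow> 'c::{banach, second_countable_topology}"
  shows "(\<Sum>\<^sub>a(a, b)\<in>UNIV. f a b) = (\<Sum>\<^sub>a(b, a)\<in>UNIV. f a b)"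
proof -
  have "bij_betw (\<lambda>(b, a). (a, b)) (UNIV :: ('b \<times> 'a) set) UNIV"
    by (auto simp: bij_betw_def inj_on_def)
  from infsetsum_reindex_bij_betw[OF this, of "\<lambda>(a, b). f a b"] show ?thesis
    by (simp add: case_prod_unfold)
qed

lemma detailed_balance_prod_reverse:
  assumes balance: "\<And>a b. p a * K a b = p b * K b a"
  shows "p (x 0) * (\<Prod>j<m. K (x j) (x (Suc j))) = p (x m) * (\<Prod>j<m. K (x (Suc j)) (x j))"
proof (induction m)
  case (Suc m)
  have "p (x 0) * (\<Prod>j<Suc m. K (x j) (x (Suc j))) =
      p (x 0) * (\<Prod>j<m. K (x j) (x (Suc j))) * K (x m) (x (Suc m))"
    by (simp add: mult_ac)
  also have "\<dots> = p (x m) * K (x m) (x (Suc m)) * (\<Prod>j<m. K (x (Suc j)) (x j))"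
    unfolding Suc.IH by (simp add: mult_ac)
  also have "\<dots> = p (x (Suc m)) * K (x (Suc m)) (x m) * (\<Prod>j<m. K (x (Suc j)) (x j))"
    by (subst balance) (rule refl)
  also have "\<dots> = p (x (Suc m)) * (\<Prod>j<Suc m. K (x (Suc j)) (x j))"
    by (simp add: mult_ac)
  finally show ?case .
qed simp

lemma measurable_count_space_imp_borel:
  fixes f :: "'a \<Rightarrow> 'b::{countable, t2_space}"
  shows "f \<in> M \<rightarrow>\<^sub>M count_space UNIV \<Longrightarrow> f \<in> borel_measurable M"
  by (simp add: measurable_cong_sets[OF refl sets_borel_eq_count_space])

lemma measurable_map_count_space:
  fixes f :: "nat \<Rightarrow> 'a \<Rightarrow> 'b::countable"
  assumes [measurable]: "\<And>j. f j \<in> M \<rightarrow>\<^sub>M count_space UNIV"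
  shows "(\<lambda>w. map (\<lambda>j. f j w) xs) \<in> M \<rightarrow>\<^sub>M count_space UNIV"
proof (induction xs)
  case (Cons a xs)
  have "(\<lambda>w. (f a w, map (\<lambda>j. f j w) xs)) \<in> M \<rightarrow>\<^sub>M count_space UNIV"
    using Cons.IH by measurable
  from measurable_compose[OF this, of "\<lambda>(y, ys). y # ys" "count_space UNIV"] show ?case
    by simp
qed simp

context prob_space
begin

lemma nn_integral_of_nat_eq_suminf:
  fixes V :: "'a \<Rightarrow> nat"
  assumes [measurable]: "V \<in> M \<rightarrow>\<^sub>M count_space UNIV"
  shows "(\<integral>\<^sup>+ w. of_nat (V w) \<partial>M) = (\<Sum>k. of_nat k * ennreal (prob {w \<in> space M. V w = k}))"
proof -
  have "(\<integral>\<^sup>+ w. of_nat (V w) \<partial>M) = (\<integral>\<^sup>+ w. (\<Sum>k. of_nat k * indicator {w \<in> space M. V w = k} w) \<partial>M)"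
  proof (rule nn_integral_cong)
    fix w assume "w \<in> space M"
    moreover have "(\<Sum>k. of_nat k * indicator {w \<in> space M. V w = k} w :: ennreal) =
        (\<Sum>k\<in>{V w}. of_nat k * indicator {w \<in> space M. V w = k} w)"
      by (rule suminf_finite) (auto simp: indicator_def)
    ultimately show "of_nat (V w) = (\<Sum>k. of_nat k * indicator {w \<in> space M. V w = k} w :: ennreal)"
      by (simp add: indicator_def)
  qed
  also have "\<dots> = (\<Sum>k. \<integral>\<^sup>+ w. of_nat k * indicator {w \<in> space M. V w = k} w \<partial>M)"
    by (rule nn_integral_suminf) measurable
  finally show ?thesis
    by (simp add: nn_integral_cmult_indicator emeasure_eq_measure)
qed

lemma distr_count_space_eq_density:
  fixes V :: "'a \<Rightarrow> 'b::countable"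
  assumes [measurable]: "V \<in> M \<rightarrow>\<^sub>M count_space UNIV"
  shows "distr M (count_space UNIV) V =
    density (count_space UNIV) (\<lambda>k. ennreal (prob {w \<in> space M. V w = k}))"
proof (rule measure_eqI_countable[where A = UNIV])
  fix a :: 'b
  have "V -` {a} \<inter> space M = {w \<in> space M. V w = a}" by auto
  then show "emeasure (distr M (count_space UNIV) V) {a} =
      emeasure (density (count_space UNIV) (\<lambda>k. ennreal (prob {w \<in> space M. V w = k}))) {a}"
    by (simp add: emeasure_distr emeasure_density emeasure_eq_measure)
qed auto

lemma integrable_countable_rv_iff:
  fixes V :: "'a \<Rightarrow> 'b::countable" and f :: "'b \<Rightarrow> real"
  assumes [measurable]: "V \<in> M \<rightarrow>\<^sub>M count_space UNIV"
  shows "integrable M (\<lambda>w. f (V w)) \<longleftrightarrow>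
    Infinite_Set_Sum.abs_summable_on (\<lambda>k. prob {w \<in> space M. V w = k} * f k) UNIV"
proof -
  have "integrable M (\<lambda>w. f (V w)) \<longleftrightarrow> integrable (distr M (count_space UNIV) V) f"
    by (simp add: integrable_distr_eq)
  also have "\<dots> \<longleftrightarrow> integrable (count_space UNIV) (\<lambda>k. prob {w \<in> space M. V w = k} *\<^sub>R f k)"
    unfolding distr_count_space_eq_density[OF assms] by (rule integrable_density) auto
  finally show ?thesis
    unfolding abs_summable_on_def by simp
qed

lemma integral_countable_rv:
  fixes V :: "'a \<Rightarrow> 'b::countable" and f :: "'b \<Rightarrow> real"
  assumes [measurable]: "V \<in> M \<rightarrow>\<^sub>M count_space UNIV"
  shows "(\<integral>w. f (V w) \<partial>M) = (\<Sum>\<^sub>ak. prob {w \<in> space M. V w = k} * f k)"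
proof -
  have "(\<integral>w. f (V w) \<partial>M) = integral\<^sup>L (distr M (count_space UNIV) V) f"
    by (simp add: integral_distr)
  also have "\<dots> = integral\<^sup>L (count_space UNIV) (\<lambda>k. prob {w \<in> space M. V w = k} *\<^sub>R f k)"
    unfolding distr_count_space_eq_density[OF assms] by (rule integral_density) auto
  finally show ?thesis
    unfolding infsetsum_def by simp
qed

lemma pgf_eq_sums:
  fixes V :: "'a \<Rightarrow> nat"
  assumes [measurable]: "V \<in> M \<rightarrow>\<^sub>M count_space UNIV"
    and q: "\<And>k. prob {w \<in> space M. V w = k} = q k"
    and abs_sums: "summable (\<lambda>k. q k * \<bar>s\<bar> ^ k)" and sums: "(\<lambda>k. q k * s ^ k) sums B"
  shows "integrable M (\<lambda>w. s ^ V w)" and "(\<integral>w. s ^ V w \<partial>M) = B"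
proof -
  have "q k \<ge> 0" for k using q[of k] measure_nonneg by metis
  then have summable: "Infinite_Set_Sum.abs_summable_on (\<lambda>k. q k * s ^ k) UNIV"
    using abs_sums by (simp add: abs_summable_on_nat_iff abs_mult power_abs)
  then show "integrable M (\<lambda>w. s ^ V w)"
    using integrable_countable_rv_iff[of V "\<lambda>k. s ^ k"] q by simp
  have "(\<integral>w. s ^ V w \<partial>M) = (\<Sum>\<^sub>ak. q k * s ^ k)"
    using integral_countable_rv[of V "\<lambda>k. s ^ k"] q by simp
  also have "\<dots> = B"
    using summable sums by (simp add: infsetsum_nat sums_iff)
  finally show "(\<integral>w. s ^ V w \<partial>M) = B" .
qed

lemma indep_var_nn_integral:
  fixes X Y :: "'a \<Rightarrow> ennreal"
  assumes "indep_var borel X borel Y"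
  shows "(\<integral>\<^sup>+ \<omega>. X \<omega> * Y \<omega> \<partial>M) = (\<integral>\<^sup>+ \<omega>. X \<omega> \<partial>M) * (\<integral>\<^sup>+ \<omega>. Y \<omega> \<partial>M)"
proof -
  have "indep_vars (\<lambda>_. borel) (case_bool X Y) UNIV"
    using assms unfolding indep_var_def
    by (rule indep_vars_cong[THEN iffD1, rotated -1]) (auto split: bool.split)
  then show ?thesis
    using indep_vars_nn_integral[of UNIV "case_bool X Y"] by (simp add: UNIV_bool mult.commute)
qed

lemma prob_symdiff_bound:
  assumes "A \<in> events" "B \<in> events"
  shows "\<bar>prob A - prob B\<bar> \<le> prob (sym_diff A B)"
proof -
  have "prob A \<le> prob (B \<union> (sym_diff A B))" and "prob B \<le> prob (A \<union> (sym_diff A B))"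
    using assms by (auto intro!: finite_measure_mono)
  moreover have "prob (B \<union> (sym_diff A B)) \<le> prob B + prob (sym_diff A B)"
    and "prob (A \<union> (sym_diff A B)) \<le> prob A + prob (sym_diff A B)"
    using assms by (auto intro!: measure_Un_le)
  ultimately show ?thesis by linarith
qed

lemma indep_event_limit:
  assumes events: "\<And>n. A n \<in> events" "A' \<in> events" "B \<in> events"
    and lim: "(\<lambda>n. prob (sym_diff (A n) A')) \<longlonglongrightarrow> 0"
    and indep: "\<And>n. prob (A n \<inter> B) = prob (A n) * prob B"
  shows "prob (A' \<inter> B) = prob A' * prob B"
proof -
  have tendsto: "(\<lambda>n. prob (A n \<inter> C)) \<longlonglongrightarrow> prob (A' \<inter> C)" if C: "C \<in> events" for C
  proof -
    have "\<bar>prob (A n \<inter> C) - prob (A' \<inter> C)\<bar> \<le> prob (sym_diff (A n) A')" for n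
    proof -
      have "\<bar>prob (A n \<inter> C) - prob (A' \<inter> C)\<bar> \<le> prob (sym_diff (A n \<inter> C) (A' \<inter> C))"
        using events C by (intro prob_symdiff_bound) auto
      also have "\<dots> \<le> prob (sym_diff (A n) A')"
        using events by (intro finite_measure_mono) auto
      finally show ?thesis .
    qed
    then have "(\<lambda>n. prob (A n \<inter> C) - prob (A' \<inter> C)) \<longlonglongrightarrow> 0"
      by (intro Lim_null_comparison[OF _ lim] always_eventually) auto
    then show ?thesis by (simp add: LIM_zero_iff)
  qed
  have "(\<lambda>n. prob (A n) * prob B) \<longlonglongrightarrow> prob A' * prob B"
    using tendsto[of "space M"] events by (intro tendsto_mult tendsto_const) (simp add: Int_absorb2)
  moreover have "(\<lambda>n. prob (A n) * prob B) \<longlonglongrightarrow> prob (A' \<inter> B)"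
    using tendsto[OF events(3)] by (simp add: indep)
  ultimately show ?thesis
    using LIMSEQ_unique by metis
qed

end

type_synonym innov_idx = "int + int \<times> nat"

definition innovs_at :: "int set \<Rightarrow> innov_idx set" where
  "innovs_at T = Inl ` T \<union> Inr ` (T \<times> {1..})"

definition inar_step :: "int \<Rightarrow> nat \<Rightarrow> (innov_idx \<Rightarrow> nat) \<Rightarrow> nat" where
  "inar_step t x \<omega> = (\<Sum>i = 1..x. \<omega> (Inr (t, i))) + \<omega> (Inl t)"

text \<open>\<^term>\<open>inar_iter t n x \<omega>\<close> is the state at time \<open>t\<close> of the recursion started in state \<open>x\<close>
  at time \<open>t - n\<close>.\<close>

primrec inar_iter :: "int \<Rightarrow> nat \<Rightarrow> nat \<Rightarrow> (innov_idx \<Rightarrow> nat) \<Rightarrow> nat" where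
  "inar_iter t 0 x \<omega> = x"
| "inar_iter t (Suc n) x \<omega> = inar_step t (inar_iter (t - 1) n x \<omega>) \<omega>"

abbreviation innov_space :: "innov_idx set \<Rightarrow> (innov_idx \<Rightarrow> nat) measure" where
  "innov_space L \<equiv> Pi\<^sub>M L (\<lambda>_. count_space UNIV)"

lemma mem_innovs_at [simp]:
  "Inl t \<in> innovs_at T \<longleftrightarrow> t \<in> T" "Inr (t, i) \<in> innovs_at T \<longleftrightarrow> t \<in> T \<and> i \<ge> 1"
  unfolding innovs_at_def by auto

lemma innovs_at_mono: "S \<subseteq> T \<Longrightarrow> innovs_at S \<subseteq> innovs_at T"
  unfolding innovs_at_def by auto

lemma innovs_at_window_Suc:
  "innovs_at {t - int (Suc n)<..t} = innovs_at {t - 1 - int n<..t - 1} \<union> innovs_at {t}"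
proof -
  have "{t - int (Suc n)<..t} = {t - 1 - int n<..t - 1} \<union> {t}" by auto
  then show ?thesis unfolding innovs_at_def by auto
qed

lemma inar_step_mono: "x \<le> y \<Longrightarrow> inar_step t x \<omega> \<le> inar_step t y \<omega>"
  unfolding inar_step_def by (intro add_mono sum_mono2) auto

lemma inar_iter_mono: "x \<le> y \<Longrightarrow> inar_iter t n x \<omega> \<le> inar_iter t n y \<omega>"
  by (induction n arbitrary: t) (auto intro: inar_step_mono)

lemma inar_step_restrict:
  assumes "innovs_at {t} \<subseteq> L"
  shows "inar_step t x (restrict \<omega> L) = inar_step t x \<omega>"
proof -
  have "Inl t \<in> L" "\<And>i. i \<ge> 1 \<Longrightarrow> Inr (t, i) \<in> L"
    using assms by auto
  then show ?thesis unfolding inar_step_def by simp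
qed

lemma inar_iter_restrict:
  "innovs_at {t - int n<..t} \<subseteq> L \<Longrightarrow> inar_iter t n x (restrict \<omega> L) = inar_iter t n x \<omega>"
proof (induction n arbitrary: t)
  case (Suc n)
  have "innovs_at {t - 1 - int n<..t - 1} \<subseteq> L" "innovs_at {t} \<subseteq> L"
    using Suc.prems innovs_at_window_Suc[of t n] by blast+
  then show ?case
    by (simp only: inar_iter.simps Suc.IH inar_step_restrict)
qed simp

lemma measurable_inar_step:
  assumes "innovs_at {t} \<subseteq> L"
  shows "(\<lambda>\<omega>. inar_step t x \<omega>) \<in> innov_space L \<rightarrow>\<^sub>M count_space UNIV"
proof -
  have "Inl t \<in> L" "\<And>i. i \<ge> 1 \<Longrightarrow> Inr (t, i) \<in> L"
    using assms by auto
  then show ?thesis unfolding inar_step_def by measurable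
qed

lemma measurable_inar_iter:
  "innovs_at {t - int n<..t} \<subseteq> L \<Longrightarrow> (\<lambda>\<omega>. inar_iter t n x \<omega>) \<in> innov_space L \<rightarrow>\<^sub>M count_space UNIV"
proof (induction n arbitrary: t)
  case (Suc n)
  have "innovs_at {t - 1 - int n<..t - 1} \<subseteq> L" "innovs_at {t} \<subseteq> L"
    using Suc.prems innovs_at_window_Suc[of t n] by blast+
  then show ?case
    using Suc.IH measurable_inar_step
    by (auto intro!: measurable_compose_countable'[where f = "\<lambda>y \<omega>. inar_step t y \<omega>"])
next
  case 0
  have "inar_iter t 0 x = (\<lambda>_. x)" by auto
  then show ?case by simp
qed

lemma of_nat_inar_step_diff:
  assumes "y \<le> u"
  shows "(of_nat (inar_step t u \<omega> - inar_step t y \<omega>) :: ennreal) =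
    (\<Sum>i. of_nat (\<omega> (Inr (t, i))) * of_bool (y < i \<and> i \<le> u))"
proof -
  have "{1..u} = {1..y} \<union> {y<..u}" using assms by auto
  then have "inar_step t u \<omega> = inar_step t y \<omega> + (\<Sum>i\<in>{y<..u}. \<omega> (Inr (t, i)))"
    unfolding inar_step_def by (simp add: sum.union_disjoint ivl_disj_int)
  moreover have "(\<Sum>i. of_nat (\<omega> (Inr (t, i))) * of_bool (y < i \<and> i \<le> u) :: ennreal) =
      (\<Sum>i\<in>{y<..u}. of_nat (\<omega> (Inr (t, i))) * of_bool (y < i \<and> i \<le> u))"
    by (rule suminf_finite) auto
  ultimately show ?thesis by simp
qed

lemma suminf_of_bool_interval:
  assumes "y \<le> (u :: nat)"
  shows "(\<Sum>i. of_bool (y < i \<and> i \<le> u) :: ennreal) = of_nat (u - y)"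
proof -
  have "(\<Sum>i. of_bool (y < i \<and> i \<le> u) :: ennreal) = (\<Sum>i\<in>{y<..u}. of_bool (y < i \<and> i \<le> u))"
    by (rule suminf_finite) auto
  then show ?thesis by simp
qed

locale geo_inar = prob_space M for M :: "'w measure" +
  fixes mu alpha :: real
    and eps :: "int \<Rightarrow> 'w \<Rightarrow> nat" and G :: "int \<Rightarrow> nat \<Rightarrow> 'w \<Rightarrow> nat" and X :: "int \<Rightarrow> 'w \<Rightarrow> nat"
  assumes mu_pos: "0 < mu" and alpha_pos: "0 < alpha" and alpha_less_1: "alpha < 1"
    and measurable_X [measurable]: "\<And>t. X t \<in> M \<rightarrow>\<^sub>M count_space UNIV"
    and measurable_eps [measurable]: "\<And>t. eps t \<in> M \<rightarrow>\<^sub>M count_space UNIV"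
    and measurable_G [measurable]: "\<And>t i. G t i \<in> M \<rightarrow>\<^sub>M count_space UNIV"
    and eps_distr: "\<And>t k. prob {w \<in> space M. eps t w = k} = geo_p ((1 - alpha) * mu) k"
    and G_distr: "\<And>t i k. i \<ge> 1 \<Longrightarrow> prob {w \<in> space M. G t i w = k} =
      zmg_p (1 - alpha / ((1 - alpha) * mu)) ((1 - alpha) * mu) k"
    and indep_innovations: "indep_vars (\<lambda>_. count_space UNIV)
      (\<lambda>j. case j of Inl t \<Rightarrow> eps t | Inr (t, i) \<Rightarrow> G t i) (range Inl \<union> Inr ` (UNIV \<times> {1..}))"
    and X_recursion: "\<And>t w. w \<in> space M \<Longrightarrow> X t w = (\<Sum>i = 1..X (t - 1) w. G t i w) + eps t w"
    and X_distr: "\<And>t k. prob {w \<in> space M. X t w = k} = geo_p mu k"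

lemma geo_inar1_imp_geo_inar:
  assumes "0 < mu" "0 < alpha" "alpha < 1" "geo_inar1 M mu alpha eps G X"
  shows "geo_inar M mu alpha eps G X"
  using assms unfolding geo_inar1_def geo_inar_def geo_inar_axioms_def Let_def by blast

context geo_inar
begin

abbreviation mu_e :: real where "mu_e \<equiv> (1 - alpha) * mu"

abbreviation pi_G :: real where "pi_G \<equiv> 1 - alpha / mu_e"

lemma mu_e_pos: "mu_e > 0"
  using mu_pos alpha_less_1 by simp

lemma mean_G_eq: "(1 - pi_G) * mu_e = alpha"
  using mu_pos alpha_less_1 by simp

definition innov :: "'w \<Rightarrow> innov_idx \<Rightarrow> nat" where
  "innov w j = (case j of Inl t \<Rightarrow> eps t w | Inr (t, i) \<Rightarrow> G t i w)"

lemma innov_simps [simp]: "innov w (Inl t) = eps t w" "innov w (Inr (t, i)) = G t i w"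
  by (simp_all add: innov_def)

lemma measurable_innov [measurable]: "(\<lambda>w. innov w j) \<in> M \<rightarrow>\<^sub>M count_space UNIV"
  by (cases j) auto

lemma indep_innov: "indep_vars (\<lambda>_. count_space UNIV) (\<lambda>j w. innov w j) (innovs_at UNIV)"
proof -
  have "(\<lambda>j w. innov w j) = (\<lambda>j. case j of Inl t \<Rightarrow> eps t | Inr (t, i) \<Rightarrow> G t i)"
    by (auto simp: fun_eq_iff innov_def split: sum.split)
  moreover have "innovs_at UNIV = range Inl \<union> Inr ` (UNIV \<times> {1..})"
    by (simp add: innovs_at_def)
  ultimately show ?thesis using indep_innovations by simp
qed

lemma measurable_inar_iter_innov [measurable]:
  "(\<lambda>w. inar_iter t n x (innov w)) \<in> M \<rightarrow>\<^sub>M count_space UNIV"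
proof -
  let ?L = "innovs_at {t - int n<..t}"
  have "(\<lambda>w. inar_iter t n x (restrict (innov w) ?L)) \<in> M \<rightarrow>\<^sub>M count_space UNIV"
    by (rule measurable_compose[OF _ measurable_inar_iter[OF order_refl]]) (rule measurable_restrict, simp)
  then show ?thesis by (simp add: inar_iter_restrict)
qed

lemma measurable_inar_step_innov [measurable]:
  "(\<lambda>w. inar_step t x (innov w)) \<in> M \<rightarrow>\<^sub>M count_space UNIV"
  using measurable_inar_iter_innov[of t 1 x] by simp

lemmas borel_measurable_X [measurable] = measurable_X[THEN measurable_count_space_imp_borel]
lemmas borel_measurable_inar_iter_innov [measurable] =
  measurable_inar_iter_innov[THEN measurable_count_space_imp_borel]

lemma X_eq_inar_step: "w \<in> space M \<Longrightarrow> X t w = inar_step t (X (t - 1) w) (innov w)"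
  using X_recursion[of w t] by (simp add: inar_step_def)

lemma X_eq_inar_iter: "w \<in> space M \<Longrightarrow> X t w = inar_iter t n (X (t - int n) w) (innov w)"
proof (induction n arbitrary: t)
  case (Suc n)
  have "X (t - 1) w = inar_iter (t - 1) n (X (t - int (Suc n)) w) (innov w)"
    using Suc.IH[of "t - 1", OF Suc.prems] by (simp add: algebra_simps)
  then show ?case
    using X_eq_inar_step[OF Suc.prems, of t] by simp
qed simp

lemma indep_var_innov_blocks:
  assumes IJ: "I \<inter> J = {}" "I \<subseteq> innovs_at UNIV" "J \<subseteq> innovs_at UNIV"
    and fg: "f \<in> innov_space I \<rightarrow>\<^sub>M N" "g \<in> innov_space J \<rightarrow>\<^sub>M N'"
    and local: "\<And>\<omega>. f (restrict \<omega> I) = f \<omega>" "\<And>\<omega>. g (restrict \<omega> J) = g \<omega>"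
  shows "indep_var N (\<lambda>w. f (innov w)) N' (\<lambda>w. g (innov w))"
  using indep_var_compose[OF indep_var_restrict[OF indep_innov IJ] fg] by (simp add: o_def local)

lemma innov_events_indep:
  assumes IJ: "I \<inter> J = {}" "I \<subseteq> innovs_at UNIV" "J \<subseteq> innovs_at UNIV"
    and PQ: "P \<in> innov_space I \<rightarrow>\<^sub>M count_space UNIV" "Q \<in> innov_space J \<rightarrow>\<^sub>M count_space UNIV"
    and local: "\<And>\<omega>. P (restrict \<omega> I) = P \<omega>" "\<And>\<omega>. Q (restrict \<omega> J) = Q \<omega>"
  shows "prob {w \<in> space M. P (innov w) \<and> Q (innov w)} =
    prob {w \<in> space M. P (innov w)} * prob {w \<in> space M. Q (innov w)}"
  using indep_varD[OF indep_var_innov_blocks[OF IJ PQ local], of "{True}" "{True}"]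
  by (simp add: vimage_def Int_def conj_commute)

lemma nn_integral_G:
  assumes i: "i \<ge> 1"
  shows "(\<integral>\<^sup>+ w. of_nat (G t i w) \<partial>M) = ennreal alpha"
proof -
  have zmg_nonneg: "zmg_p pi_G mu_e k \<ge> 0" for k
    using G_distr[OF i, of t k] measure_nonneg by metis
  have "(\<integral>\<^sup>+ w. of_nat (G t i w) \<partial>M) = (\<Sum>k. of_nat k * ennreal (prob {w \<in> space M. G t i w = k}))"
    by (rule nn_integral_of_nat_eq_suminf) simp
  also have "\<dots> = (\<Sum>k. ennreal (zmg_p pi_G mu_e k * real k))"
    using zmg_nonneg by (simp add: G_distr[OF i] ennreal_of_nat_eq_real_of_nat ennreal_mult mult.commute)
  also have "\<dots> = ennreal alpha"
    using zmg_p_mean_sums[of mu_e pi_G] mu_e_pos zmg_nonneg mean_G_eq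
    by (intro suminf_ennreal_eq) auto
  finally show ?thesis .
qed

lemma nn_integral_G_times_past_event:
  assumes i: "i \<ge> 1"
    and P: "P \<in> innov_space (innovs_at {..<t}) \<rightarrow>\<^sub>M count_space UNIV"
    and local: "\<And>\<omega>. P (restrict \<omega> (innovs_at {..<t})) = P \<omega>"
  shows "(\<integral>\<^sup>+ w. of_nat (G t i w) * of_bool (P (innov w)) \<partial>M) =
    ennreal alpha * (\<integral>\<^sup>+ w. of_bool (P (innov w)) \<partial>M)"
proof -
  have "indep_var borel (\<lambda>w. of_nat (innov w (Inr (t, i))) :: ennreal) borel (\<lambda>w. of_bool (P (innov w)))"
  proof (rule indep_var_innov_blocks[where f = "\<lambda>\<omega>. of_nat (\<omega> (Inr (t, i)))"
        and g = "\<lambda>\<omega>. of_bool (P \<omega>)" and I = "{Inr (t, i)}" and J = "innovs_at {..<t}"])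
    show "(\<lambda>\<omega>. of_nat (\<omega> (Inr (t, i))) :: ennreal) \<in> innov_space {Inr (t, i)} \<rightarrow>\<^sub>M borel"
      by measurable
    show "(\<lambda>\<omega>. of_bool (P \<omega>) :: ennreal) \<in> innov_space (innovs_at {..<t}) \<rightarrow>\<^sub>M borel"
      using P by measurable
  qed (use i local in \<open>auto simp: innovs_at_def\<close>)
  then show ?thesis
    using indep_var_nn_integral nn_integral_G[OF i] by simp
qed

text \<open>Each individual alive before a step has on average \<open>alpha\<close> offspring after it.\<close>

lemma nn_integral_inar_iter_spread:
  "(\<integral>\<^sup>+ w. of_nat (inar_iter t n K (innov w) - inar_iter t n 0 (innov w)) \<partial>M) = of_nat K * ennreal alpha ^ n"
proof (induction n arbitrary: t)
  case 0
  then show ?case by (simp add: emeasure_space_1)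
next
  case (Suc n)
  define Y where "Y \<omega> = inar_iter (t - 1) n 0 \<omega>" for \<omega>
  define U where "U \<omega> = inar_iter (t - 1) n K \<omega>" for \<omega>
  have YU: "Y \<omega> \<le> U \<omega>" for \<omega>
    unfolding Y_def U_def by (rule inar_iter_mono) simp
  have past: "innovs_at {t - 1 - int n<..t - 1} \<subseteq> innovs_at {..<t}"
    by (rule innovs_at_mono) auto
  have thinned: "(\<integral>\<^sup>+ w. of_nat (G t i w) * of_bool (Y (innov w) < i \<and> i \<le> U (innov w)) \<partial>M) =
      ennreal alpha * (\<integral>\<^sup>+ w. of_bool (Y (innov w) < i \<and> i \<le> U (innov w)) \<partial>M)" for i
  proof (cases "i = 0")
    case False
    show ?thesis
    proof (rule nn_integral_G_times_past_event)
      show "(\<lambda>\<omega>. Y \<omega> < i \<and> i \<le> U \<omega>) \<in> innov_space (innovs_at {..<t}) \<rightarrow>\<^sub>M count_space UNIV"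
        using measurable_inar_iter[OF past] unfolding Y_def U_def by measurable
      show "(Y (restrict \<omega> (innovs_at {..<t})) < i \<and> i \<le> U (restrict \<omega> (innovs_at {..<t}))) =
          (Y \<omega> < i \<and> i \<le> U \<omega>)" for \<omega>
        unfolding Y_def U_def by (simp add: inar_iter_restrict[OF past])
    qed (use False in simp)
  qed simp
  have "(\<integral>\<^sup>+ w. of_nat (inar_iter t (Suc n) K (innov w) - inar_iter t (Suc n) 0 (innov w)) \<partial>M) =
      (\<integral>\<^sup>+ w. (\<Sum>i. of_nat (G t i w) * of_bool (Y (innov w) < i \<and> i \<le> U (innov w))) \<partial>M)"
    using of_nat_inar_step_diff[OF YU] by (simp add: Y_def U_def)
  also have "\<dots> = (\<Sum>i. \<integral>\<^sup>+ w. of_nat (G t i w) * of_bool (Y (innov w) < i \<and> i \<le> U (innov w)) \<partial>M)"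
    by (rule nn_integral_suminf) (simp add: Y_def U_def)
  also have "\<dots> = ennreal alpha * (\<Sum>i. \<integral>\<^sup>+ w. of_bool (Y (innov w) < i \<and> i \<le> U (innov w)) \<partial>M)"
    by (simp add: thinned ennreal_suminf_cmult)
  also have "(\<Sum>i. \<integral>\<^sup>+ w. of_bool (Y (innov w) < i \<and> i \<le> U (innov w)) \<partial>M) =
      (\<integral>\<^sup>+ w. (\<Sum>i. of_bool (Y (innov w) < i \<and> i \<le> U (innov w))) \<partial>M)"
    by (rule nn_integral_suminf[symmetric]) (simp add: Y_def U_def)
  also have "\<dots> = (\<integral>\<^sup>+ w. of_nat (U (innov w) - Y (innov w)) \<partial>M)"
    by (simp add: suminf_of_bool_interval YU)
  finally show ?case
    using Suc.IH by (simp add: Y_def U_def mult_ac)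
qed

lemma prob_inar_iter_spread_le:
  "prob {w \<in> space M. inar_iter t n K (innov w) \<noteq> inar_iter t n 0 (innov w)} \<le> K * alpha ^ n"
proof -
  let ?S = "{w \<in> space M. inar_iter t n K (innov w) \<noteq> inar_iter t n 0 (innov w)}"
  have "emeasure M ?S = (\<integral>\<^sup>+ w. indicator ?S w \<partial>M)"
    by (rule nn_integral_indicator[symmetric]) measurable
  also have "\<dots> \<le> (\<integral>\<^sup>+ w. of_nat (inar_iter t n K (innov w) - inar_iter t n 0 (innov w)) \<partial>M)"
  proof (intro nn_integral_mono)
    fix w
    have "inar_iter t n 0 (innov w) \<le> inar_iter t n K (innov w)"
      by (rule inar_iter_mono) simp
    then show "indicator ?S w \<le> (of_nat (inar_iter t n K (innov w) - inar_iter t n 0 (innov w)) :: ennreal)"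
      by (auto simp: indicator_def)
  qed
  also have "\<dots> = of_nat K * ennreal alpha ^ n"
    by (rule nn_integral_inar_iter_spread)
  also have "\<dots> = ennreal (K * alpha ^ n)"
    using alpha_pos by (simp add: ennreal_of_nat_eq_real_of_nat ennreal_mult ennreal_power)
  finally show ?thesis
    using alpha_pos by (simp add: emeasure_eq_measure ennreal_le_iff)
qed

lemma distr_X: "distr M (count_space UNIV) (X t) = density (count_space UNIV) (\<lambda>k. ennreal (geo_p mu k))"
  by (simp add: distr_count_space_eq_density X_distr)

lemma prob_X_greater: "prob {w \<in> space M. X t w > K} = prob {w \<in> space M. X 0 w > K}"
proof -
  have "prob {w \<in> space M. X s w > K} = measure (distr M (count_space UNIV) (X s)) {K<..}" for s
    by (subst measure_distr) (auto simp: vimage_def Int_def conj_commute)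
  then show ?thesis
    unfolding distr_X by simp
qed

lemma tendsto_prob_X_greater: "(\<lambda>K. prob {w \<in> space M. X 0 w > K}) \<longlonglongrightarrow> 0"
proof -
  have "(\<lambda>K. prob {w \<in> space M. X 0 w > K}) \<longlonglongrightarrow> prob (\<Inter>K. {w \<in> space M. X 0 w > K})"
    by (rule finite_Lim_measure_decseq) (auto simp: decseq_def)
  moreover have "(\<Inter>K. {w \<in> space M. X 0 w > K}) = {}"
    by auto
  ultimately show ?thesis by simp
qed

lemma prob_X_ne_inar_iter_le:
  "prob {w \<in> space M. X t w \<noteq> inar_iter t n 0 (innov w)} \<le> prob {w \<in> space M. X 0 w > K} + K * alpha ^ n"
proof -
  have "{w \<in> space M. X t w \<noteq> inar_iter t n 0 (innov w)} \<subseteq>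
      {w \<in> space M. X (t - int n) w > K} \<union>
      {w \<in> space M. inar_iter t n K (innov w) \<noteq> inar_iter t n 0 (innov w)}"
  proof (intro subsetI)
    fix w assume "w \<in> {w \<in> space M. X t w \<noteq> inar_iter t n 0 (innov w)}"
    then have w: "w \<in> space M" and ne: "X t w \<noteq> inar_iter t n 0 (innov w)" by auto
    show "w \<in> {w \<in> space M. X (t - int n) w > K} \<union>
        {w \<in> space M. inar_iter t n K (innov w) \<noteq> inar_iter t n 0 (innov w)}"
    proof (cases "X (t - int n) w \<le> K")
      case True
      have "inar_iter t n 0 (innov w) \<le> X t w" "X t w \<le> inar_iter t n K (innov w)"
        unfolding X_eq_inar_iter[OF w, of t n] using True by (simp_all add: inar_iter_mono)
      then show ?thesis using w ne by auto
    qed (use w in auto)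
  qed
  then have "prob {w \<in> space M. X t w \<noteq> inar_iter t n 0 (innov w)} \<le>
      prob {w \<in> space M. X (t - int n) w > K} +
      prob {w \<in> space M. inar_iter t n K (innov w) \<noteq> inar_iter t n 0 (innov w)}"
    by (intro order_trans[OF finite_measure_mono measure_Un_le]) measurable
  then show ?thesis
    using prob_X_greater[where t = "t - int n" and K = K] prob_inar_iter_spread_le[of t n K] by linarith
qed

text \<open>Since \<open>X (t - n)\<close> is tight, \<open>X t\<close> is asymptotically a function of the innovations in
  \<open>{t - n<..t}\<close> alone.\<close>

lemma tendsto_prob_X_ne_inar_iter: "(\<lambda>n. prob {w \<in> space M. X t w \<noteq> inar_iter t n 0 (innov w)}) \<longlonglongrightarrow> 0"
proof (rule order_tendstoI)
  fix e :: real assume e: "0 < e"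
  obtain K where K: "prob {w \<in> space M. X 0 w > K} < e / 2"
    using order_tendstoD(2)[OF tendsto_prob_X_greater, of "e / 2"] e
    by (auto simp: eventually_sequentially)
  have "(\<lambda>n. real K * alpha ^ n) \<longlonglongrightarrow> real K * 0"
    using alpha_pos alpha_less_1 by (intro tendsto_mult tendsto_const LIMSEQ_power_zero) auto
  then have "eventually (\<lambda>n. K * alpha ^ n < e / 2) sequentially"
    using e by (intro order_tendstoD(2)) auto
  then show "eventually (\<lambda>n. prob {w \<in> space M. X t w \<noteq> inar_iter t n 0 (innov w)} < e) sequentially"
  proof eventually_elim
    case (elim n)
    then show ?case using prob_X_ne_inar_iter_le[of t n K] K by linarith
  qed
qed (auto intro!: always_eventually intro: less_le_trans[OF _ measure_nonneg])

lemma prob_inar_iter_inar_step_indep: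
  assumes S: "S \<subseteq> {..u}" "finite S"
  shows "prob {w \<in> space M. (\<forall>s\<in>S. inar_iter s n 0 (innov w) = y s) \<and> inar_step (u + 1) c (innov w) = b} =
    prob {w \<in> space M. \<forall>s\<in>S. inar_iter s n 0 (innov w) = y s} *
    prob {w \<in> space M. inar_step (u + 1) c (innov w) = b}"
proof (rule innov_events_indep[where I = "innovs_at {..u}" and J = "innovs_at {u + 1}"])
  have past: "innovs_at {s - int n<..s} \<subseteq> innovs_at {..u}" if "s \<in> S" for s
    using that S(1) by (intro innovs_at_mono) auto
  show "(\<lambda>\<omega>. \<forall>s\<in>S. inar_iter s n 0 \<omega> = y s) \<in> innov_space (innovs_at {..u}) \<rightarrow>\<^sub>M count_space UNIV"
    using S(2) measurable_inar_iter[OF past] by measurable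
  show "(\<forall>s\<in>S. inar_iter s n 0 (restrict \<omega> (innovs_at {..u})) = y s) = (\<forall>s\<in>S. inar_iter s n 0 \<omega> = y s)"
    for \<omega>
    using inar_iter_restrict[OF past] by simp
  show "(\<lambda>\<omega>. inar_step (u + 1) c \<omega> = b) \<in> innov_space (innovs_at {u + 1}) \<rightarrow>\<^sub>M count_space UNIV"
    using measurable_inar_step[OF order_refl] by measurable
  show "(inar_step (u + 1) c (restrict \<omega> (innovs_at {u + 1})) = b) = (inar_step (u + 1) c \<omega> = b)" for \<omega>
    by (simp add: inar_step_restrict)
qed (auto simp: innovs_at_def)

lemma tendsto_prob_sym_diff_inar_iter:
  assumes "finite S"
  shows "(\<lambda>n. prob (sym_diff {w \<in> space M. \<forall>s\<in>S. inar_iter s n 0 (innov w) = y s}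
    {w \<in> space M. \<forall>s\<in>S. X s w = y s})) \<longlonglongrightarrow> 0"
proof (rule Lim_null_comparison)
  let ?D = "\<lambda>n s. {w \<in> space M. X s w \<noteq> inar_iter s n 0 (innov w)}"
  show "(\<lambda>n. \<Sum>s\<in>S. prob (?D n s)) \<longlonglongrightarrow> 0"
    by (intro tendsto_null_sum tendsto_prob_X_ne_inar_iter)
  have "prob (sym_diff {w \<in> space M. \<forall>s\<in>S. inar_iter s n 0 (innov w) = y s}
      {w \<in> space M. \<forall>s\<in>S. X s w = y s}) \<le> prob (\<Union>s\<in>S. ?D n s)" for n
    using assms by (intro finite_measure_mono) (auto, measurable)
  also have "prob (\<Union>s\<in>S. ?D n s) \<le> (\<Sum>s\<in>S. prob (?D n s))" for n
    using assms by (intro finite_measure_subadditive_finite) auto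
  finally show "eventually (\<lambda>n. norm (prob (sym_diff {w \<in> space M. \<forall>s\<in>S. inar_iter s n 0 (innov w) = y s}
      {w \<in> space M. \<forall>s\<in>S. X s w = y s})) \<le> (\<Sum>s\<in>S. prob (?D n s))) sequentially"
    by simp
qed

text \<open>The past is approximated by functions of earlier innovations, which are independent of
  those at time \<open>u + 1\<close>.\<close>

lemma prob_past_inar_step_indep:
  assumes S: "S \<subseteq> {..u}" "finite S"
  shows "prob {w \<in> space M. (\<forall>s\<in>S. X s w = y s) \<and> inar_step (u + 1) c (innov w) = b} =
    prob {w \<in> space M. \<forall>s\<in>S. X s w = y s} * prob {w \<in> space M. inar_step (u + 1) c (innov w) = b}"
proof -
  define A where "A n = {w \<in> space M. \<forall>s\<in>S. inar_iter s n 0 (innov w) = y s}" for n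
  define A' where "A' = {w \<in> space M. \<forall>s\<in>S. X s w = y s}"
  define B where "B = {w \<in> space M. inar_step (u + 1) c (innov w) = b}"
  have events: "A n \<in> events" "A' \<in> events" "B \<in> events" for n
    unfolding A_def A'_def B_def using S(2) by measurable
  have "A n \<inter> B = {w \<in> space M. (\<forall>s\<in>S. inar_iter s n 0 (innov w) = y s) \<and> inar_step (u + 1) c (innov w) = b}"
    for n unfolding A_def B_def by auto
  then have indep: "prob (A n \<inter> B) = prob (A n) * prob B" for n
    unfolding A_def B_def using prob_inar_iter_inar_step_indep[OF S] by simp
  have "(\<lambda>n. prob (sym_diff (A n) A')) \<longlonglongrightarrow> 0"
    unfolding A_def A'_def by (rule tendsto_prob_sym_diff_inar_iter[OF S(2)])
  then have "prob (A' \<inter> B) = prob A' * prob B"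
    by (rule indep_event_limit[OF events _ indep])
  moreover have "A' \<inter> B = {w \<in> space M. (\<forall>s\<in>S. X s w = y s) \<and> inar_step (u + 1) c (innov w) = b}"
    unfolding A'_def B_def by auto
  ultimately show ?thesis
    unfolding A'_def B_def by simp
qed

definition G_pgf :: "real \<Rightarrow> real" where
  "G_pgf s = pi_G + (1 - pi_G) / (1 + mu_e * (1 - s))"

definition eps_pgf :: "real \<Rightarrow> real" where
  "eps_pgf s = 1 / (1 + mu_e * (1 - s))"

lemma G_pgf_integral:
  assumes i: "i \<ge> 1" and s: "\<bar>s\<bar> * mu_e < 1 + mu_e"
  shows "integrable M (\<lambda>w. s ^ G t i w)" and "(\<integral>w. s ^ G t i w \<partial>M) = G_pgf s"
proof -
  have "summable (\<lambda>k. zmg_p pi_G mu_e k * \<bar>s\<bar> ^ k)"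
    using zmg_p_pgf_sums[of mu_e "\<bar>s\<bar>" pi_G] mu_e_pos s by (auto intro: sums_summable)
  moreover have "(\<lambda>k. zmg_p pi_G mu_e k * s ^ k) sums G_pgf s"
    unfolding G_pgf_def using zmg_p_pgf_sums[of mu_e s pi_G] mu_e_pos s by simp
  ultimately show "integrable M (\<lambda>w. s ^ G t i w)" "(\<integral>w. s ^ G t i w \<partial>M) = G_pgf s"
    using pgf_eq_sums[OF measurable_G G_distr[OF i]] by auto
qed

lemma eps_pgf_integral:
  assumes s: "\<bar>s\<bar> * mu_e < 1 + mu_e"
  shows "integrable M (\<lambda>w. s ^ eps t w)" and "(\<integral>w. s ^ eps t w \<partial>M) = eps_pgf s"
proof -
  have "summable (\<lambda>k. geo_p mu_e k * \<bar>s\<bar> ^ k)"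
    using geo_p_pgf_sums[of mu_e "\<bar>s\<bar>"] mu_e_pos s by (auto intro: sums_summable)
  moreover have "(\<lambda>k. geo_p mu_e k * s ^ k) sums eps_pgf s"
    unfolding eps_pgf_def using geo_p_pgf_sums[of mu_e s] mu_e_pos s by simp
  ultimately show "integrable M (\<lambda>w. s ^ eps t w)" "(\<integral>w. s ^ eps t w \<partial>M) = eps_pgf s"
    using pgf_eq_sums[OF measurable_eps eps_distr] by auto
qed

lemma inar_step_pgf_integral:
  assumes s: "\<bar>s\<bar> * mu_e < 1 + mu_e"
  shows "integrable M (\<lambda>w. s ^ inar_step t a (innov w))"
    and "(\<integral>w. s ^ inar_step t a (innov w) \<partial>M) = G_pgf s ^ a * eps_pgf s"
proof -
  define I :: "innov_idx set" where "I = (\<lambda>i. Inr (t, i)) ` {1..a}"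
  define J where "J = insert (Inl t) I"
  have I: "Inl t \<notin> I" "finite I" unfolding I_def by auto
  have J: "finite J" "J \<subseteq> innovs_at UNIV" unfolding J_def I_def by auto
  have indep: "indep_vars (\<lambda>_. borel) (\<lambda>j w. s ^ innov w j) J"
    using indep_vars_compose2[OF indep_vars_subset[OF indep_innov J(2)], of "\<lambda>_ n. s ^ n" "\<lambda>_. borel"]
    by simp
  have factors: "integrable M (\<lambda>w. s ^ innov w j) \<and>
      (\<integral>w. s ^ innov w j \<partial>M) = (case j of Inl _ \<Rightarrow> eps_pgf s | Inr _ \<Rightarrow> G_pgf s)" if "j \<in> J" for j
    using that G_pgf_integral[OF _ s] eps_pgf_integral[OF s] unfolding J_def I_def by auto
  have product: "s ^ inar_step t a \<omega> = (\<Prod>j\<in>J. s ^ \<omega> j)" for \<omega>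
  proof -
    have "(\<Prod>j\<in>I. s ^ \<omega> j) = (\<Prod>i = 1..a. s ^ \<omega> (Inr (t, i)))"
      unfolding I_def by (subst prod.reindex) (auto simp: inj_on_def)
    then show ?thesis
      unfolding J_def inar_step_def using I by (simp add: power_add power_sum mult.commute)
  qed
  show "integrable M (\<lambda>w. s ^ inar_step t a (innov w))"
    unfolding product using factors by (intro indep_vars_integrable[OF J(1) indep]) blast
  have "(\<integral>w. s ^ inar_step t a (innov w) \<partial>M) = (\<Prod>j\<in>J. \<integral>w. s ^ innov w j \<partial>M)"
    unfolding product using factors by (intro indep_vars_lebesgue_integral[OF J(1) indep]) blast
  also have "\<dots> = (\<Prod>j\<in>J. case j of Inl _ \<Rightarrow> eps_pgf s | Inr _ \<Rightarrow> G_pgf s)"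
    using factors by (intro prod.cong) auto
  also have "\<dots> = G_pgf s ^ a * eps_pgf s"
    unfolding J_def using I by (simp add: I_def prod.reindex inj_on_def)
  finally show "(\<integral>w. s ^ inar_step t a (innov w) \<partial>M) = G_pgf s ^ a * eps_pgf s" .
qed

lemma inar_step_pgf_sums:
  assumes "\<bar>s\<bar> * mu_e < 1 + mu_e"
  shows "Infinite_Set_Sum.abs_summable_on (\<lambda>b. prob {w \<in> space M. inar_step t a (innov w) = b} * s ^ b) UNIV"
    and "(\<Sum>\<^sub>ab. prob {w \<in> space M. inar_step t a (innov w) = b} * s ^ b) = G_pgf s ^ a * eps_pgf s"
  using integrable_countable_rv_iff[of "\<lambda>w. inar_step t a (innov w)" "\<lambda>k. s ^ k"]
    integral_countable_rv[of "\<lambda>w. inar_step t a (innov w)" "\<lambda>k. s ^ k"] inar_step_pgf_integral[OF assms]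
  by auto

definition trans_prob :: "nat \<Rightarrow> nat \<Rightarrow> real" where
  "trans_prob a b = prob {w \<in> space M. inar_step 0 a (innov w) = b}"

lemmas trans_prob_pgf_sums = inar_step_pgf_sums[where t = 0, folded trans_prob_def]

text \<open>The generating function of one step does not depend on \<open>t\<close>.\<close>

lemma prob_inar_step_eq_trans_prob: "prob {w \<in> space M. inar_step t a (innov w) = b} = trans_prob a b"
proof -
  have "(\<lambda>b. prob {w \<in> space M. inar_step t a (innov w) = b}) = trans_prob a"
  proof (rule powser_coeffs_unique[where r = 1 and f = "\<lambda>s. G_pgf s ^ a * eps_pgf s"])
    fix s :: real assume "\<bar>s\<bar> < 1"
    then have "\<bar>s\<bar> * mu_e \<le> 1 * mu_e"
      using mu_e_pos by (intro mult_right_mono) auto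
    then have s: "\<bar>s\<bar> * mu_e < 1 + mu_e" by simp
    show "(\<lambda>b. prob {w \<in> space M. inar_step t a (innov w) = b} * s ^ b) sums (G_pgf s ^ a * eps_pgf s)"
      using sums_infsetsum_nat'[OF inar_step_pgf_sums(1)[OF s]] inar_step_pgf_sums(2)[OF s] by simp
    show "(\<lambda>b. trans_prob a b * s ^ b) sums (G_pgf s ^ a * eps_pgf s)"
      using sums_infsetsum_nat'[OF trans_prob_pgf_sums(1)[OF s]] trans_prob_pgf_sums(2)[OF s] by simp
  qed simp
  then show ?thesis by (simp add: fun_eq_iff)
qed

lemma trans_prob_nonneg: "trans_prob a b \<ge> 0"
  by (simp add: trans_prob_def)

lemma prob_X_pair: "prob {w \<in> space M. X (t - 1) w = a \<and> X t w = b} = geo_p mu a * trans_prob a b"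
proof -
  have "prob {w \<in> space M. (\<forall>s\<in>{t - 1}. X s w = a) \<and> inar_step (t - 1 + 1) a (innov w) = b} =
      prob {w \<in> space M. \<forall>s\<in>{t - 1}. X s w = a} *
      prob {w \<in> space M. inar_step (t - 1 + 1) a (innov w) = b}"
    by (rule prob_past_inar_step_indep) auto
  moreover have "{w \<in> space M. (\<forall>s\<in>{t - 1}. X s w = a) \<and> inar_step (t - 1 + 1) a (innov w) = b} =
      {w \<in> space M. X (t - 1) w = a \<and> X t w = b}"
    using X_eq_inar_step[of _ t] by auto
  ultimately show ?thesis
    by (simp add: X_distr prob_inar_step_eq_trans_prob)
qed

lemma G_pgf_abs_le:
  assumes s: "\<bar>s\<bar> * mu_e < 1 + mu_e"
  shows "\<bar>G_pgf s\<bar> \<le> G_pgf \<bar>s\<bar>" and "0 \<le> G_pgf \<bar>s\<bar>"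
proof -
  have s': "\<bar>\<bar>s\<bar>\<bar> * mu_e < 1 + mu_e" using s by simp
  have "\<bar>\<integral>w. s ^ G 0 1 w \<partial>M\<bar> \<le> (\<integral>w. \<bar>s ^ G 0 1 w\<bar> \<partial>M)"
    by (rule integral_abs_bound)
  then show "\<bar>G_pgf s\<bar> \<le> G_pgf \<bar>s\<bar>"
    using G_pgf_integral(2)[OF order_refl s] G_pgf_integral(2)[OF order_refl s'] by (simp add: power_abs)
  show "0 \<le> G_pgf \<bar>s\<bar>"
    using G_pgf_integral(2)[OF order_refl s', of 0, symmetric] by (simp add: integral_nonneg_AE)
qed

lemma X_pair_pgf_sums:
  assumes s1: "\<bar>s1\<bar> * mu_e < 1 + mu_e" and s2: "\<bar>s2\<bar> * G_pgf \<bar>s1\<bar> * mu < 1 + mu"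
  shows "Infinite_Set_Sum.abs_summable_on (\<lambda>(a, b). geo_p mu a * trans_prob a b * s2 ^ a * s1 ^ b) UNIV"
    and "(\<Sum>\<^sub>a(a, b)\<in>UNIV. geo_p mu a * trans_prob a b * s2 ^ a * s1 ^ b) =
      eps_pgf s1 / (1 + mu * (1 - s2 * G_pgf s1))"
proof -
  let ?F = "\<lambda>(a, b). geo_p mu a * trans_prob a b * s2 ^ a * s1 ^ b"
  have s1': "\<bar>\<bar>s1\<bar>\<bar> * mu_e < 1 + mu_e" using s1 by simp
  have geo_nonneg: "geo_p mu a \<ge> 0" for a
    using geo_p_pos[OF mu_pos] less_imp_le by blast
  have row: "(\<lambda>b. ?F (a, b)) = (\<lambda>b. geo_p mu a * s2 ^ a * (trans_prob a b * s1 ^ b))" for a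
    by (simp add: fun_eq_iff mult_ac)
  have row_norm: "(\<lambda>b. norm (?F (a, b))) = (\<lambda>b. geo_p mu a * \<bar>s2\<bar> ^ a * (trans_prob a b * \<bar>s1\<bar> ^ b))" for a
    using geo_nonneg trans_prob_nonneg by (simp add: fun_eq_iff abs_mult power_abs mult_ac)
  have G_abs: "\<bar>s2 * G_pgf s1\<bar> * mu < 1 + mu"
  proof -
    have "\<bar>s2 * G_pgf s1\<bar> \<le> \<bar>s2\<bar> * G_pgf \<bar>s1\<bar>"
      using G_pgf_abs_le(1)[OF s1] by (simp add: abs_mult mult_left_mono)
    then show ?thesis
      using s2 mu_pos by (meson le_less_trans mult_right_mono less_imp_le)
  qed
  have rows: "Infinite_Set_Sum.abs_summable_on (\<lambda>b. ?F (a, b)) UNIV" for a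
    unfolding row by (intro abs_summable_on_cmult_right trans_prob_pgf_sums(1)[OF s1])
  have "(\<Sum>\<^sub>ab. norm (?F (a, b))) = eps_pgf \<bar>s1\<bar> * (geo_p mu a * (\<bar>s2\<bar> * G_pgf \<bar>s1\<bar>) ^ a)" for a
    unfolding row_norm infsetsum_cmult_right[OF trans_prob_pgf_sums(1)[OF s1']] trans_prob_pgf_sums(2)[OF s1']
    by (simp add: power_mult_distrib mult_ac)
  moreover have "(\<lambda>a. geo_p mu a * (\<bar>s2\<bar> * G_pgf \<bar>s1\<bar>) ^ a) sums (1 / (1 + mu * (1 - \<bar>s2\<bar> * G_pgf \<bar>s1\<bar>)))"
    using mu_pos s2 G_pgf_abs_le(2)[OF s1] by (intro geo_p_pgf_sums) (auto simp: abs_mult)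
  ultimately have norms: "summable (\<lambda>a. \<Sum>\<^sub>ab. norm (?F (a, b)))"
    by (auto intro: summable_mult sums_summable)
  have row_sum: "(\<Sum>\<^sub>ab. ?F (a, b)) = eps_pgf s1 * (geo_p mu a * (s2 * G_pgf s1) ^ a)" for a
    unfolding row infsetsum_cmult_right[OF trans_prob_pgf_sums(1)[OF s1]] trans_prob_pgf_sums(2)[OF s1]
    by (simp add: power_mult_distrib mult_ac)
  have "(\<lambda>a. geo_p mu a * (s2 * G_pgf s1) ^ a) sums (1 / (1 + mu * (1 - s2 * G_pgf s1)))"
    using mu_pos G_abs by (intro geo_p_pgf_sums) auto
  from sums_mult[OF this, of "eps_pgf s1"]
  have "(\<lambda>a. \<Sum>\<^sub>ab. ?F (a, b)) sums (eps_pgf s1 / (1 + mu * (1 - s2 * G_pgf s1)))"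
    by (simp only: row_sum) simp
  from infsetsum_pairs_by_rows[OF rows norms this]
  show "Infinite_Set_Sum.abs_summable_on ?F UNIV"
    and "infsetsum ?F UNIV = eps_pgf s1 / (1 + mu * (1 - s2 * G_pgf s1))"
    by simp_all
qed

lemma G_pgf_times_denominator:
  assumes "1 + mu_e * (1 - s) \<noteq> 0"
  shows "G_pgf s * (1 + mu_e * (1 - s)) = 1 + mu_e * (1 - s) - alpha * (1 - s)"
proof -
  have ring: "p * A + (1 - p) = A - (1 - p) * mu_e * (1 - s)" if "A = 1 + mu_e * (1 - s)" for p A
    unfolding that by (simp add: algebra_simps)
  have "G_pgf s * (1 + mu_e * (1 - s)) = pi_G * (1 + mu_e * (1 - s)) + (1 - pi_G)"
    using assms unfolding G_pgf_def by (simp add: distrib_right)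
  also have "\<dots> = 1 + mu_e * (1 - s) - (1 - pi_G) * mu_e * (1 - s)"
    by (rule ring) simp
  finally show ?thesis
    by (simp only: mean_G_eq)
qed

definition joint_pgf :: "real \<Rightarrow> real \<Rightarrow> real" where
  "joint_pgf s1 s2 = 1 / (1 + mu * ((1 - s1) + (1 - s2) + (mu_e - alpha) * (1 - s1) * (1 - s2)))"

lemma joint_pgf_commute: "joint_pgf s1 s2 = joint_pgf s2 s1"
  unfolding joint_pgf_def by (simp add: algebra_simps)

lemma joint_pgf_eq:
  assumes "1 + mu_e * (1 - s1) \<noteq> 0"
  shows "eps_pgf s1 / (1 + mu * (1 - s2 * G_pgf s1)) = joint_pgf s1 s2"
proof -
  have "(1 + mu * (1 - s2 * G_pgf s1)) * (1 + mu_e * (1 - s1)) =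
      1 + mu * ((1 - s1) + (1 - s2) + (mu_e - alpha) * (1 - s1) * (1 - s2))"
    using G_pgf_times_denominator[OF assms] by algebra
  then show ?thesis
    unfolding joint_pgf_def eps_pgf_def by (metis divide_divide_eq_left mult.commute)
qed

definition delta :: real where
  "delta = min (1 / 2) (min (1 / (2 * mu_e)) (1 / (8 * mu)))"

lemma delta: "0 < delta" "delta \<le> 1 / 2" "delta * mu_e \<le> 1 / 2" "delta * mu \<le> 1 / 8"
proof -
  show "0 < delta" "delta \<le> 1 / 2"
    using mu_e_pos mu_pos by (simp_all add: delta_def)
  have "delta \<le> 1 / (2 * mu_e)" "delta \<le> 1 / (8 * mu)"
    by (simp_all add: delta_def)
  then show "delta * mu_e \<le> 1 / 2" "delta * mu \<le> 1 / 8"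
    using mu_e_pos mu_pos by (simp_all add: field_simps)
qed

lemma times_mu_e_le:
  assumes "0 \<le> x" "x < 1 + delta"
  shows "x * mu_e \<le> mu_e + 1 / 2"
proof -
  have "x * mu_e \<le> (1 + delta) * mu_e"
    using assms mu_e_pos by (intro mult_right_mono) auto
  then show ?thesis
    using delta(3) by (simp add: algebra_simps)
qed

lemma G_pgf_le:
  assumes x: "0 \<le> x" "x < 1 + delta"
  shows "G_pgf x \<le> 1 + 2 * delta"
proof -
  define A where "A = 1 + mu_e * (1 - x)"
  have A: "A \<ge> 1 / 2"
    using times_mu_e_le[OF x] unfolding A_def by (simp add: algebra_simps)
  have G: "G_pgf x = 1 + alpha * (x - 1) / A"
    using G_pgf_times_denominator[of x] A unfolding A_def[symmetric] by (simp add: field_simps)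
  have "alpha * (x - 1) / A \<le> 2 * delta"
  proof (cases "x \<le> 1")
    case True
    then have "alpha * (x - 1) / A \<le> 0"
      using alpha_pos A by (intro divide_nonpos_pos mult_nonneg_nonpos) auto
    then show ?thesis using delta(1) by linarith
  next
    case False
    have "alpha * (x - 1) / A \<le> (x - 1) / A"
      using False alpha_less_1 A by (intro divide_right_mono) (auto simp: mult_left_le_one_le)
    also have "\<dots> \<le> (x - 1) / (1 / 2)"
      using A False by (intro divide_left_mono) auto
    finally show ?thesis using x by simp
  qed
  then show ?thesis
    using G by linarith
qed

lemma pgf_domain:
  assumes x: "0 \<le> x" "x < 1 + delta" and y: "0 \<le> y" "y < 1 + delta"
  shows "x * mu_e < 1 + mu_e" and "y * G_pgf x * mu < 1 + mu"
proof -
  show x_mu_e: "x * mu_e < 1 + mu_e"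
    using times_mu_e_le[OF x] by simp
  have "G_pgf x \<ge> 0"
    using G_pgf_abs_le(2)[of x] x x_mu_e by simp
  then have "y * G_pgf x \<le> (1 + delta) * (1 + 2 * delta)"
    using y G_pgf_le[OF x] by (intro mult_mono) auto
  also have "\<dots> \<le> 1 + 4 * delta"
    using delta(1,2) by (simp add: algebra_simps power2_eq_square)
  finally have "y * G_pgf x * mu \<le> (1 + 4 * delta) * mu"
    using mu_pos by (intro mult_right_mono) auto
  also have "\<dots> = mu + 4 * (delta * mu)"
    by (simp add: algebra_simps)
  finally show "y * G_pgf x * mu < 1 + mu"
    using delta(4) by linarith
qed

lemma joint_pgf_sums:
  assumes s1: "\<bar>s1\<bar> < 1 + delta" and s2: "\<bar>s2\<bar> < 1 + delta"
  shows "Infinite_Set_Sum.abs_summable_on (\<lambda>(a, b). geo_p mu a * trans_prob a b * s2 ^ a * s1 ^ b) UNIV"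
    and "(\<Sum>\<^sub>a(a, b)\<in>UNIV. geo_p mu a * trans_prob a b * s2 ^ a * s1 ^ b) = joint_pgf s1 s2"
proof -
  have dom: "\<bar>s1\<bar> * mu_e < 1 + mu_e" "\<bar>s2\<bar> * G_pgf \<bar>s1\<bar> * mu < 1 + mu"
    using pgf_domain[of "\<bar>s1\<bar>" "\<bar>s2\<bar>"] s1 s2 by auto
  show "Infinite_Set_Sum.abs_summable_on (\<lambda>(a, b). geo_p mu a * trans_prob a b * s2 ^ a * s1 ^ b) UNIV"
    by (rule X_pair_pgf_sums(1)[OF dom])
  have "s1 * mu_e \<le> \<bar>s1\<bar> * mu_e"
    using mu_e_pos by (intro mult_right_mono) auto
  then have "1 + mu_e * (1 - s1) \<noteq> 0"
    using dom(1) by (simp add: algebra_simps)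
  then show "(\<Sum>\<^sub>a(a, b)\<in>UNIV. geo_p mu a * trans_prob a b * s2 ^ a * s1 ^ b) = joint_pgf s1 s2"
    using X_pair_pgf_sums(2)[OF dom] joint_pgf_eq by simp
qed

lemma X_joint_pgf:
  assumes "\<bar>s1\<bar> < 1 + delta" and "\<bar>s2\<bar> < 1 + delta"
  shows "integrable M (\<lambda>w. s1 ^ X t w * s2 ^ X (t - 1) w)"
    and "(\<integral>w. s1 ^ X t w * s2 ^ X (t - 1) w \<partial>M) = joint_pgf s1 s2"
proof -
  let ?V = "\<lambda>w. (X (t - 1) w, X t w)"
  have probs: "(\<lambda>k. prob {w \<in> space M. ?V w = k} * (case k of (a, b) \<Rightarrow> s2 ^ a * s1 ^ b)) =
      (\<lambda>(a, b). geo_p mu a * trans_prob a b * s2 ^ a * s1 ^ b)"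
    by (auto simp: fun_eq_iff prob_X_pair)
  have V: "?V \<in> M \<rightarrow>\<^sub>M count_space UNIV"
    by measurable
  have f: "(\<lambda>w. s1 ^ X t w * s2 ^ X (t - 1) w) = (\<lambda>w. (\<lambda>(a, b). s2 ^ a * s1 ^ b) (?V w))"
    by (simp add: fun_eq_iff)
  show "integrable M (\<lambda>w. s1 ^ X t w * s2 ^ X (t - 1) w)"
    unfolding f integrable_countable_rv_iff[OF V] probs by (rule joint_pgf_sums(1)[OF assms])
  show "(\<integral>w. s1 ^ X t w * s2 ^ X (t - 1) w \<partial>M) = joint_pgf s1 s2"
    unfolding f integral_countable_rv[OF V] probs by (rule joint_pgf_sums(2)[OF assms])
qed

text \<open>Compare coefficients in the symmetric joint generating function.\<close>

lemma detailed_balance: "geo_p mu a * trans_prob a b = geo_p mu b * trans_prob b a"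
proof -
  have "(\<lambda>a b. geo_p mu a * trans_prob a b) = (\<lambda>a b. geo_p mu b * trans_prob b a)"
  proof (rule powser2_coeffs_unique[OF delta(1)])
    fix x y :: real assume "\<bar>x\<bar> < delta" "\<bar>y\<bar> < delta"
    then have x: "\<bar>x\<bar> < 1 + delta" and y: "\<bar>y\<bar> < 1 + delta" by auto
    show "Infinite_Set_Sum.abs_summable_on (\<lambda>(a, b). geo_p mu a * trans_prob a b * x ^ a * y ^ b) UNIV"
      by (rule joint_pgf_sums(1)[OF y x])
    show "Infinite_Set_Sum.abs_summable_on (\<lambda>(a, b). geo_p mu b * trans_prob b a * x ^ a * y ^ b) UNIV"
      using joint_pgf_sums(1)[OF x y]
        abs_summable_on_Times_swap[of "\<lambda>(a, b). geo_p mu a * trans_prob a b * y ^ a * x ^ b" UNIV UNIV]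
      by (simp add: case_prod_unfold mult_ac)
    have "(\<Sum>\<^sub>a(a, b)\<in>UNIV. geo_p mu b * trans_prob b a * x ^ a * y ^ b) = joint_pgf x y"
      using joint_pgf_sums(2)[OF x y] infsetsum_pairs_swap[of "\<lambda>a b. geo_p mu b * trans_prob b a * x ^ a * y ^ b"]
      by (simp add: mult_ac)
    then show "(\<Sum>\<^sub>a(a, b)\<in>UNIV. geo_p mu a * trans_prob a b * x ^ a * y ^ b) =
        (\<Sum>\<^sub>a(a, b)\<in>UNIV. geo_p mu b * trans_prob b a * x ^ a * y ^ b)"
      using joint_pgf_sums(2)[OF y x] joint_pgf_commute by simp
  qed
  then show ?thesis by (metis)
qed

lemma distr_X_pair_swap:
  "distr M (count_space UNIV) (\<lambda>w. (X t w, X (t - 1) w)) = distr M (count_space UNIV) (\<lambda>w. (X (t - 1) w, X t w))"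
proof (rule measure_eqI_countable[where A = UNIV])
  fix ab :: "nat \<times> nat"
  obtain a b where ab: "ab = (a, b)" by fastforce
  have "(\<lambda>w. (X t w, X (t - 1) w)) -` {(a, b)} \<inter> space M = {w \<in> space M. X (t - 1) w = b \<and> X t w = a}"
    "(\<lambda>w. (X (t - 1) w, X t w)) -` {(a, b)} \<inter> space M = {w \<in> space M. X (t - 1) w = a \<and> X t w = b}"
    by auto
  then show "emeasure (distr M (count_space UNIV) (\<lambda>w. (X t w, X (t - 1) w))) {ab} =
      emeasure (distr M (count_space UNIV) (\<lambda>w. (X (t - 1) w, X t w))) {ab}"
    unfolding ab by (simp add: emeasure_distr emeasure_eq_measure prob_X_pair detailed_balance)
qed auto

lemma prob_X_path:
  "prob {w \<in> space M. \<forall>j\<le>m. X (u + int j) w = x j} = geo_p mu (x 0) * (\<Prod>j<m. trans_prob (x j) (x (Suc j)))"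
proof (induction m)
  case 0
  have "{w \<in> space M. \<forall>j\<le>0. X (u + int j) w = x j} = {w \<in> space M. X u w = x 0}" by auto
  then show ?case by (simp add: X_distr)
next
  case (Suc m)
  let ?S = "(\<lambda>j. u + int j) ` {..m}"
  have path: "(\<forall>j\<le>Suc m. X (u + int j) w = x j) \<longleftrightarrow>
      (\<forall>s\<in>?S. X s w = x (nat (s - u))) \<and> inar_step (u + int m + 1) (x m) (innov w) = x (Suc m)"
    if w: "w \<in> space M" for w
  proof -
    have all_le_Suc: "(\<forall>j\<le>Suc m. P j) \<longleftrightarrow> (\<forall>j\<le>m. P j) \<and> P (Suc m)" for P
      by (auto simp: le_Suc_eq)
    have step: "X (u + int (Suc m)) w = inar_step (u + int m + 1) (X (u + int m) w) (innov w)"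
      using X_eq_inar_step[OF w, of "u + int m + 1"] by (simp add: ac_simps)
    have "(\<forall>j\<le>Suc m. X (u + int j) w = x j) \<longleftrightarrow>
        (\<forall>j\<le>m. X (u + int j) w = x j) \<and> inar_step (u + int m + 1) (x m) (innov w) = x (Suc m)"
      unfolding all_le_Suc step by (auto dest: spec[of _ m])
    then show ?thesis by auto
  qed
  have "prob {w \<in> space M. \<forall>j\<le>Suc m. X (u + int j) w = x j} =
      prob {w \<in> space M. (\<forall>s\<in>?S. X s w = x (nat (s - u))) \<and>
        inar_step (u + int m + 1) (x m) (innov w) = x (Suc m)}"
    using path by (intro arg_cong[where f = prob]) blast
  also have "\<dots> = prob {w \<in> space M. \<forall>s\<in>?S. X s w = x (nat (s - u))} *
      prob {w \<in> space M. inar_step (u + int m + 1) (x m) (innov w) = x (Suc m)}"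
    by (rule prob_past_inar_step_indep) auto
  also have "{w \<in> space M. \<forall>s\<in>?S. X s w = x (nat (s - u))} = {w \<in> space M. \<forall>j\<le>m. X (u + int j) w = x j}"
    by auto
  finally show ?case
    using Suc.IH by (simp add: prob_inar_step_eq_trans_prob)
qed

lemma prob_X_path_reverse:
  "prob {w \<in> space M. \<forall>j\<le>m. X (v + int m - int j) w = x j} = prob {w \<in> space M. \<forall>j\<le>m. X (u + int j) w = x j}"
proof -
  have "(\<forall>j\<le>m. X (v + int m - int j) w = x j) \<longleftrightarrow> (\<forall>j\<le>m. X (v + int j) w = x (m - j))" for w
  proof -
    have "(\<forall>j\<le>m. X (v + int m - int j) w = x j) \<longleftrightarrow> (\<forall>j\<le>m. X (v + int m - int (m - j)) w = x (m - j))"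
      by (metis diff_diff_cancel diff_le_self)
    also have "\<dots> \<longleftrightarrow> (\<forall>j\<le>m. X (v + int j) w = x (m - j))"
      by (auto simp: of_nat_diff)
    finally show ?thesis .
  qed
  then have "prob {w \<in> space M. \<forall>j\<le>m. X (v + int m - int j) w = x j} =
      geo_p mu (x m) * (\<Prod>j<m. trans_prob (x (m - j)) (x (m - Suc j)))"
    using prob_X_path[of m v "\<lambda>j. x (m - j)"] by simp
  also have "(\<Prod>j<m. trans_prob (x (m - j)) (x (m - Suc j))) = (\<Prod>j<m. trans_prob (x (Suc j)) (x j))"
    by (subst prod.nat_diff_reindex[symmetric]) (auto intro!: prod.cong simp: Suc_diff_Suc)
  also have "geo_p mu (x m) * \<dots> = geo_p mu (x 0) * (\<Prod>j<m. trans_prob (x j) (x (Suc j)))"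
    by (rule detailed_balance_prod_reverse[OF detailed_balance, symmetric])
  finally show ?thesis
    unfolding prob_X_path .
qed

lemma distr_X_path_reverse:
  "distr M (count_space UNIV) (\<lambda>w. map (\<lambda>j. X (u + int j) w) [0..<Suc m]) =
    distr M (count_space UNIV) (\<lambda>w. map (\<lambda>j. X (v + int m - int j) w) [0..<Suc m])"
proof (rule measure_eqI_countable[where A = UNIV])
  fix l :: "nat list"
  have path: "map f [0..<Suc m] = l \<longleftrightarrow> length l = Suc m \<and> (\<forall>j\<le>m. f j = l ! j)" for f :: "nat \<Rightarrow> nat"
    by (auto simp: list_eq_iff_nth_eq less_Suc_eq_le simp del: upt_Suc)
  have "emeasure M {w \<in> space M. map (\<lambda>j. X (u + int j) w) [0..<Suc m] = l} =
      emeasure M {w \<in> space M. map (\<lambda>j. X (v + int m - int j) w) [0..<Suc m] = l}"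
    using prob_X_path_reverse[of m v "\<lambda>j. l ! j" u]
    by (cases "length l = Suc m") (simp_all add: path emeasure_eq_measure del: upt_Suc)
  then show "emeasure (distr M (count_space UNIV) (\<lambda>w. map (\<lambda>j. X (u + int j) w) [0..<Suc m])) {l} =
      emeasure (distr M (count_space UNIV) (\<lambda>w. map (\<lambda>j. X (v + int m - int j) w) [0..<Suc m])) {l}"
    by (simp add: emeasure_distr measurable_map_count_space vimage_def Int_def conj_commute del: upt_Suc)
qed auto

text \<open>Any finite set of times lies in a window \<open>[t0, t0 + m]\<close>; the reversed window has the same
  law, and the marginal at the chosen times is a function of the window.\<close>

lemma distr_X_reverse:
  fixes n :: nat and ts :: "nat \<Rightarrow> int"
  assumes ts: "strict_mono_on {..<n} ts"
  shows "distr M (Pi\<^sub>M {..<n} (\<lambda>_. count_space UNIV)) (\<lambda>w. \<lambda>i\<in>{..<n}. X (ts i) w) =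
    distr M (Pi\<^sub>M {..<n} (\<lambda>_. count_space UNIV)) (\<lambda>w. \<lambda>i\<in>{..<n}. X (\<tau> - ts i) w)"
proof (cases "n = 0")
  case True
  then show ?thesis by (simp add: restrict_def)
next
  case False
  define t0 where "t0 = ts 0"
  define m where "m = nat (ts (n - 1) - t0)"
  define v where "v = \<tau> - ts (n - 1)"
  have bounds: "t0 \<le> ts i" "ts i \<le> ts (n - 1)" if "i < n" for i
    using that False strict_mono_on_leD[OF ts] unfolding t0_def by auto
  then have m: "int m = ts (n - 1) - t0"
    unfolding m_def using False by auto
  let ?path = "\<lambda>w. map (\<lambda>j. X (t0 + int j) w) [0..<Suc m]"
  let ?rev_path = "\<lambda>w. map (\<lambda>j. X (v + int m - int j) w) [0..<Suc m]"
  let ?select = "\<lambda>l::nat list. \<lambda>i\<in>{..<n}. l ! nat (ts i - t0)"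
  have index: "nat (ts i - t0) < Suc m" "int (nat (ts i - t0)) = ts i - t0" if "i < n" for i
    using bounds[OF that] m by auto
  let ?P = "Pi\<^sub>M {..<n} (\<lambda>_. count_space UNIV)"
  have path: "(\<lambda>w. \<lambda>i\<in>{..<n}. X (ts i) w) = ?select \<circ> ?path"
    using index by (auto simp: fun_eq_iff simp del: upt_Suc)
  have rev_path: "(\<lambda>w. \<lambda>i\<in>{..<n}. X (\<tau> - ts i) w) = ?select \<circ> ?rev_path"
    using index by (auto simp: fun_eq_iff v_def m simp del: upt_Suc)
  have select: "?select \<in> count_space UNIV \<rightarrow>\<^sub>M ?P"
    by (simp add: space_PiM)
  have "distr M ?P (?select \<circ> ?path) = distr (distr M (count_space UNIV) ?path) ?P ?select"
    by (rule distr_distr[OF select measurable_map_count_space, symmetric]) simp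
  also have "distr M (count_space UNIV) ?path = distr M (count_space UNIV) ?rev_path"
    by (rule distr_X_path_reverse)
  also have "distr (distr M (count_space UNIV) ?rev_path) ?P ?select = distr M ?P (?select \<circ> ?rev_path)"
    by (rule distr_distr[OF select measurable_map_count_space]) simp
  finally show ?thesis
    unfolding path rev_path .
qed

end

theorem mainTheorem10:
  fixes M :: "'w measure" and mu alpha :: real
    and eps :: "int \<Rightarrow> 'w \<Rightarrow> nat" and G :: "int \<Rightarrow> nat \<Rightarrow> 'w \<Rightarrow> nat" and X :: "int \<Rightarrow> 'w \<Rightarrow> nat"
  assumes "mu > 0" and "0 < alpha" and "alpha < 1"
    and "geo_inar1 M mu alpha eps G X"
  shows "(\<exists>\<delta>>0. \<forall>t s1 s2. -\<delta> < s1 \<and> s1 < 1 + \<delta> \<and> -\<delta> < s2 \<and> s2 < 1 + \<delta> \<longrightarrow>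
            integrable M (\<lambda>w. s1 ^ X t w * s2 ^ X (t - 1) w) \<and>
            (\<integral>w. s1 ^ X t w * s2 ^ X (t - 1) w \<partial>M) =
              1 / (1 + mu * ((1 - s1) + (1 - s2) + ((1 - alpha) * mu - alpha) * (1 - s1) * (1 - s2))))
    \<and> (\<forall>t. distr M (count_space UNIV) (\<lambda>w. (X t w, X (t - 1) w)) =
           distr M (count_space UNIV) (\<lambda>w. (X (t - 1) w, X t w)))
    \<and> (\<forall>(n::nat) (ts :: nat \<Rightarrow> int) \<tau>. strict_mono_on {..<n} ts \<longrightarrow>
         distr M (Pi\<^sub>M {..<n} (\<lambda>_. count_space UNIV)) (\<lambda>w. \<lambda>i\<in>{..<n}. X (ts i) w) =
         distr M (Pi\<^sub>M {..<n} (\<lambda>_. count_space UNIV)) (\<lambda>w. \<lambda>i\<in>{..<n}. X (\<tau> - ts i) w))"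
proof -
  interpret geo_inar M mu alpha eps G X
    using geo_inar1_imp_geo_inar assms by blast
  have "integrable M (\<lambda>w. s1 ^ X t w * s2 ^ X (t - 1) w) \<and>
      (\<integral>w. s1 ^ X t w * s2 ^ X (t - 1) w \<partial>M) = joint_pgf s1 s2"
    if "-delta < s1" "s1 < 1 + delta" "-delta < s2" "s2 < 1 + delta" for t s1 s2
    using X_joint_pgf[of s1 s2 t] that delta(1) by auto
  then show ?thesis
    using delta(1) distr_X_pair_swap distr_X_reverse unfolding joint_pgf_def by blast
qed

end
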